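(* Let $d,l,m\geq1$ and let $\mathcal{Q}=\{P_1,\dots,P_l\}$ be a measurement scheme of POVMs on $\mathbb{C}^d$ with outcome set $\{1,\dots,m\}$. Then $\mathcal{Q}$ determines any pure state among all states if and only if every non-zero element of $\ker M_{\mathcal{Q}}$ has at least two (counted with multiplicity) positive eigenvalues.
   Context: $H(d)$ is the real vector space of $d\times d$ complex Hermitian matrices. A POVM with outcome set $\{1,\dots,m\}$ is a map $j\mapsto P(j)\in H(d)$ with $P(j)\geq0$ and $\sum_j P(j)=\mathbb{1}$. The scheme induces the real-linear map $M_{\mathcal{Q}}:H(d)\to M_{lm}(\mathbb{R})$, $M_{\mathcal{Q}}(X)_{i,j}=\mathrm{tr}(XP_i(j))$. A state is a positive semidefinite trace-one matrix; a pure state is a rank-one state. $\mathcal{Q}$ determines any pure state among all states if for every pure state $\sigma$ and every state $\varrho$, $M_{\mathcal{Q}}(\sigma)=M_{\mathcal{Q}}(\varrho)$ implies $\varrho=\sigma$. *)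

theory Defs
  imports "Jordan_Normal_Form.Char_Poly" "Jordan_Normal_Form.DL_Rank"
begin

text \<open>Complex d x d matrices are Jordan_Normal_Form matrices of type complex mat.
  POVMs are indexed 0..<l and outcomes 0..<m (0-based reindexing of 1..l, 1..m).\<close>

definition hermitian :: "nat \<Rightarrow> complex mat \<Rightarrow> bool" where
  "hermitian d A \<longleftrightarrow> A \<in> carrier_mat d d \<and>
     (\<forall>i<d. \<forall>j<d. A $$ (i, j) = cnj (A $$ (j, i)))"

definition psd :: "nat \<Rightarrow> complex mat \<Rightarrow> bool" where
  "psd d A \<longleftrightarrow> hermitian d A \<and>
     (\<forall>v \<in> carrier_vec d. 0 \<le> Re (\<Sum>i<d. \<Sum>j<d. cnj (v $ i) * A $$ (i, j) * v $ j))"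

definition mtrace :: "complex mat \<Rightarrow> complex" where
  "mtrace A = (\<Sum>i<dim_row A. A $$ (i, i))"

definition is_state :: "nat \<Rightarrow> complex mat \<Rightarrow> bool" where
  "is_state d \<rho> \<longleftrightarrow> psd d \<rho> \<and> mtrace \<rho> = 1"

definition is_pure_state :: "nat \<Rightarrow> complex mat \<Rightarrow> bool" where
  "is_pure_state d \<sigma> \<longleftrightarrow> is_state d \<sigma> \<and> vec_space.rank d \<sigma> = 1"

definition is_povm :: "nat \<Rightarrow> nat \<Rightarrow> (nat \<Rightarrow> complex mat) \<Rightarrow> bool" where
  "is_povm d m P \<longleftrightarrow> (\<forall>j<m. psd d (P j)) \<and>
     (\<forall>a<d. \<forall>b<d. (\<Sum>j<m. P j $$ (a, b)) = (1\<^sub>m d :: complex mat) $$ (a, b))"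

text \<open>The measurement map M_Q(X)_{i,j} = tr(X P_i(j)) (real for Hermitian X).\<close>
definition M_Q :: "nat \<Rightarrow> nat \<Rightarrow> (nat \<Rightarrow> nat \<Rightarrow> complex mat) \<Rightarrow> complex mat \<Rightarrow> real mat" where
  "M_Q l m Q X = mat l m (\<lambda>(i, j). Re (mtrace (X * Q i j)))"

definition ker_M_Q :: "nat \<Rightarrow> nat \<Rightarrow> nat \<Rightarrow> (nat \<Rightarrow> nat \<Rightarrow> complex mat) \<Rightarrow> complex mat set" where
  "ker_M_Q d l m Q = {X. hermitian d X \<and> M_Q l m Q X = 0\<^sub>m l m}"

definition determines_pure_states ::
  "nat \<Rightarrow> nat \<Rightarrow> nat \<Rightarrow> (nat \<Rightarrow> nat \<Rightarrow> complex mat) \<Rightarrow> bool" where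
  "determines_pure_states d l m Q \<longleftrightarrow>
     (\<forall>\<sigma> \<rho>. is_pure_state d \<sigma> \<longrightarrow> is_state d \<rho> \<longrightarrow>
        M_Q l m Q \<sigma> = M_Q l m Q \<rho> \<longrightarrow> \<rho> = \<sigma>)"

definition num_pos_eigenvalues :: "complex mat \<Rightarrow> nat" where
  "num_pos_eigenvalues A =
     (\<Sum>a \<in> {a. poly (char_poly A) a = 0 \<and> a \<in> \<real> \<and> 0 < Re a}. Polynomial.order a (char_poly A))"

end

theory Submission
  imports Defs "Jordan_Normal_Form.Schur_Decomposition"
begin

text \<open>If a pure state \<sigma> and a state \<rho> have the same statistics, then Y = \<sigma> - \<rho> lies in the
  kernel. Since \<sigma> has rank one, the span of two eigenvectors of Y with positive eigenvalues
  contains a vector v \<noteq> 0 with \<sigma> v = 0, and then 0 < \<langle>v, Y v\<rangle> = - \<langle>v, \<rho> v\<rangle> \<le> 0.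
  Conversely, every kernel element is traceless because the effects of each POVM sum to the
  identity. So a nonzero kernel element X with at most one positive eigenvalue has exactly one,
  \<lambda>, with unit eigenvector \<psi>, and \<psi>\<psi>* and \<psi>\<psi>* - X / \<lambda> are different states with the same
  statistics.\<close>

section \<open>Hermitian matrices and the Hermitian inner product\<close>

lemma hermitian_carrier_mat: "hermitian n A \<Longrightarrow> A \<in> carrier_mat n n"
  unfolding hermitian_def by blast

lemma hermitian_cnj_entry:
  assumes "hermitian n A" "i < n" "j < n"
  shows "cnj (A $$ (j, i)) = A $$ (i, j)"
  using assms unfolding hermitian_def by (metis complex_cnj_cnj)

lemma hermitianI:
  assumes "A \<in> carrier_mat n n" "\<And>i j. i < n \<Longrightarrow> j < n \<Longrightarrow> A $$ (i, j) = cnj (A $$ (j, i))"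
  shows "hermitian n A"
  unfolding hermitian_def using assms by blast

lemma hermitian_minus:
  assumes "hermitian n A" "hermitian n B"
  shows "hermitian n (A - B)"
proof (rule hermitianI)
  show "A - B \<in> carrier_mat n n"
    using assms hermitian_carrier_mat by (metis minus_carrier_mat)
  fix i j assume "i < n" "j < n"
  then show "(A - B) $$ (i, j) = cnj ((A - B) $$ (j, i))"
    using assms hermitian_carrier_mat hermitian_cnj_entry by fastforce
qed

lemma mult_mat_vec_index_sum:
  assumes "A \<in> carrier_mat n k" "v \<in> carrier_vec k" "a < n"
  shows "(A *\<^sub>v v) $ a = (\<Sum>b<k. A $$ (a, b) * v $ b)"
  using assms by (auto simp: scalar_prod_def lessThan_atLeast0 intro!: sum.cong)

lemma mult_mat_index_sum:
  assumes "A \<in> carrier_mat n k" "B \<in> carrier_mat k m" "a < n" "b < m"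
  shows "(A * B) $$ (a, b) = (\<Sum>c<k. A $$ (a, c) * B $$ (c, b))"
  using assms by (auto simp: scalar_prod_def lessThan_atLeast0 intro!: sum.cong)

lemma mtrace_mult:
  assumes "A \<in> carrier_mat n k" "B \<in> carrier_mat k n"
  shows "mtrace (A * B) = (\<Sum>a<n. \<Sum>c<k. A $$ (a, c) * B $$ (c, a))"
proof -
  have "dim_row (A * B) = n" using assms by simp
  then show ?thesis
    unfolding mtrace_def using assms
    by (auto simp: mult_mat_index_sum simp del: index_mult_mat intro!: sum.cong)
qed

lemma mtrace_mult_commute:
  assumes "A \<in> carrier_mat n k" "B \<in> carrier_mat k n"
  shows "mtrace (A * B) = mtrace (B * A)"
  unfolding mtrace_mult[OF assms] mtrace_mult[OF assms(2,1)]
  by (subst sum.swap) (simp add: mult.commute)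

lemma mtrace_diff_smult_mult:
  assumes "A \<in> carrier_mat n n" "B \<in> carrier_mat n n" "C \<in> carrier_mat n n"
  shows "mtrace ((A - c \<cdot>\<^sub>m B) * C) = mtrace (A * C) - c * mtrace (B * C)"
proof -
  have AB: "A - c \<cdot>\<^sub>m B \<in> carrier_mat n n" using assms(2) by (simp add: minus_carrier_mat)
  show ?thesis
    unfolding mtrace_mult[OF AB assms(3)] mtrace_mult[OF assms(1,3)] mtrace_mult[OF assms(2,3)]
    using assms by (simp add: sum_subtractf sum_distrib_left algebra_simps)
qed

definition cinner :: "nat \<Rightarrow> complex vec \<Rightarrow> complex vec \<Rightarrow> complex" where
  "cinner n u v = (\<Sum>a<n. cnj (u $ a) * v $ a)"

lemma cinner_add_left:
  "x \<in> carrier_vec n \<Longrightarrow> y \<in> carrier_vec n \<Longrightarrow> cinner n (x + y) u = cinner n x u + cinner n y u"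
  by (simp add: cinner_def sum.distrib distrib_right)

lemma cinner_add_right:
  "x \<in> carrier_vec n \<Longrightarrow> y \<in> carrier_vec n \<Longrightarrow> cinner n u (x + y) = cinner n u x + cinner n u y"
  by (simp add: cinner_def sum.distrib distrib_left)

lemma cinner_diff_right:
  "x \<in> carrier_vec n \<Longrightarrow> y \<in> carrier_vec n \<Longrightarrow> cinner n u (x - y) = cinner n u x - cinner n u y"
  by (simp add: cinner_def sum_subtractf right_diff_distrib)

lemma cinner_uminus_right: "x \<in> carrier_vec n \<Longrightarrow> cinner n u (- x) = - cinner n u x"
  by (simp add: cinner_def sum_negf)

lemma cinner_smult_left: "x \<in> carrier_vec n \<Longrightarrow> cinner n (c \<cdot>\<^sub>v x) u = cnj c * cinner n x u"
  by (simp add: cinner_def sum_distrib_left algebra_simps)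

lemma cinner_smult_right: "x \<in> carrier_vec n \<Longrightarrow> cinner n u (c \<cdot>\<^sub>v x) = c * cinner n u x"
  by (simp add: cinner_def sum_distrib_left algebra_simps)

lemma cinner_commute: "cinner n u v = cnj (cinner n v u)"
  by (simp add: cinner_def mult.commute)

lemma cinner_zero_right [simp]: "cinner n u (0\<^sub>v n) = 0"
  by (simp add: cinner_def)

lemma cinner_self: "cinner n v v = complex_of_real (\<Sum>a<n. (cmod (v $ a))\<^sup>2)"
  unfolding cinner_def of_real_sum complex_norm_square by (simp add: mult.commute)

lemma nonzero_vec_index:
  assumes "v \<in> carrier_vec n" "v \<noteq> 0\<^sub>v n"
  shows "\<exists>a<n. v $ a \<noteq> 0"
proof (rule ccontr)
  assume "\<not> (\<exists>a<n. v $ a \<noteq> 0)"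
  then have "v = 0\<^sub>v n" using assms(1) by (intro eq_vecI) auto
  with assms(2) show False ..
qed

lemma cinner_self_pos:
  assumes "v \<in> carrier_vec n" "v \<noteq> 0\<^sub>v n"
  shows "(\<Sum>a<n. (cmod (v $ a))\<^sup>2) > 0"
proof -
  obtain a where a: "a < n" "v $ a \<noteq> 0" using nonzero_vec_index[OF assms] by blast
  have "(cmod (v $ a))\<^sup>2 \<le> (\<Sum>a<n. (cmod (v $ a))\<^sup>2)"
    by (rule member_le_sum) (use a in auto)
  moreover have "(cmod (v $ a))\<^sup>2 > 0" using a by simp
  ultimately show ?thesis by linarith
qed

lemma cinner_mult_mat_vec:
  assumes "A \<in> carrier_mat n n" "v \<in> carrier_vec n"
  shows "cinner n u (A *\<^sub>v v) = (\<Sum>a<n. \<Sum>b<n. cnj (u $ a) * A $$ (a, b) * v $ b)"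
  unfolding cinner_def using assms
  by (auto simp: mult_mat_vec_index_sum sum_distrib_left mult.assoc
      simp del: index_mult_mat_vec intro!: sum.cong)

lemma cinner_hermitian:
  assumes "hermitian n A" "u \<in> carrier_vec n" "v \<in> carrier_vec n"
  shows "cinner n u (A *\<^sub>v v) = cinner n (A *\<^sub>v u) v"
proof -
  have A: "A \<in> carrier_mat n n" using assms(1) by (rule hermitian_carrier_mat)
  have "cinner n u (A *\<^sub>v v) = (\<Sum>b<n. \<Sum>a<n. cnj (A $$ (b, a) * u $ a) * v $ b)"
    unfolding cinner_mult_mat_vec[OF A assms(3)]
    by (subst sum.swap) (auto intro!: sum.cong simp: hermitian_cnj_entry[OF assms(1)] mult.commute)
  also have "\<dots> = cinner n (A *\<^sub>v u) v"
    unfolding cinner_def using A assms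
    by (simp add: mult_mat_vec_index_sum sum_distrib_right cnj_sum del: index_mult_mat_vec)
  finally show ?thesis .
qed

lemma psd_iff_cinner:
  "psd n A \<longleftrightarrow> hermitian n A \<and> (\<forall>v\<in>carrier_vec n. 0 \<le> Re (cinner n v (A *\<^sub>v v)))"
  unfolding psd_def by (auto simp: cinner_mult_mat_vec hermitian_carrier_mat)

lemma smult_mat_mult_vec:
  assumes "R \<in> carrier_mat n n" "v \<in> carrier_vec n"
  shows "(t \<cdot>\<^sub>m R) *\<^sub>v v = t \<cdot>\<^sub>v (R *\<^sub>v v)"
  using assms by (intro eq_vecI) (auto simp: smult_scalar_prod_distrib[of _ n])

section \<open>The spectral theorem for Hermitian matrices\<close>

lemma sum_list_constant:
  "(\<forall>x\<in>set xs. x = t) \<Longrightarrow> sum_list xs = of_nat (length xs) * (t :: complex)"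
  by (induction xs) (auto simp: algebra_simps)

lemma mtrace_eq_sum_list_eigenvalues:
  assumes N: "N \<in> carrier_mat n n" and es: "char_poly N = (\<Prod>a\<leftarrow>es. [:- a, 1:])"
  shows "mtrace N = sum_list es"
proof -
  obtain B P Q where sd: "schur_decomposition N es = (B, P, Q)"
    by (cases "schur_decomposition N es") auto
  from schur_decomposition[OF N es sd]
  have sim: "similar_mat_wit N B P Q" and diag: "diag_mat B = es" by auto
  note wit = similar_mat_witD2[OF N sim]
  have PB: "P * B \<in> carrier_mat n n" using wit by auto
  have "mtrace N = mtrace ((P * B) * Q)" using wit by simp
  also have "\<dots> = mtrace (Q * (P * B))" by (rule mtrace_mult_commute[OF PB wit(7)])
  also have "Q * (P * B) = B" using wit by (simp add: assoc_mult_mat[symmetric, of Q n n P n B n])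
  also have "mtrace B = sum_list es"
    using wit unfolding diag[symmetric] mtrace_def diag_mat_def
    by (simp add: interv_sum_list_conv_sum_set_nat atLeast0LessThan)
  finally show ?thesis .
qed

lemma exists_eigenvalue_neq:
  assumes N: "(N :: complex mat) \<in> carrier_mat n n" and tr: "mtrace N \<noteq> of_nat n * t"
  shows "\<exists>e. eigenvalue N e \<and> e \<noteq> t"
proof -
  obtain es where es: "char_poly N = (\<Prod>a\<leftarrow>es. [:- a, 1:])" "length es = n"
    using char_poly_factorized[OF N] by blast
  have "\<exists>e\<in>set es. e \<noteq> t"
    using tr sum_list_constant[of es t] mtrace_eq_sum_list_eigenvalues[OF N es(1)] es(2)
    by auto
  then obtain e where "e \<in> set es" "e \<noteq> t" by blast
  moreover have "poly (char_poly N) e = 0"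
    unfolding es(1) by (rule linear_poly_root[OF \<open>e \<in> set es\<close>])
  ultimately show ?thesis using eigenvalue_root_char_poly[OF N] by blast
qed

definition orthonormal :: "nat \<Rightarrow> nat \<Rightarrow> (nat \<Rightarrow> complex vec) \<Rightarrow> bool" where
  "orthonormal n k us \<longleftrightarrow> (\<forall>i<k. us i \<in> carrier_vec n) \<and>
     (\<forall>i<k. \<forall>j<k. cinner n (us i) (us j) = (if i = j then 1 else 0))"

definition orthonormal_eigenvectors ::
  "nat \<Rightarrow> complex mat \<Rightarrow> nat \<Rightarrow> (nat \<Rightarrow> complex vec) \<Rightarrow> (nat \<Rightarrow> real) \<Rightarrow> bool" where
  "orthonormal_eigenvectors n A k us lam \<longleftrightarrow> orthonormal n k us \<and>
     (\<forall>i<k. A *\<^sub>v us i = complex_of_real (lam i) \<cdot>\<^sub>v us i)"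

lemma orthonormalD:
  assumes "orthonormal n k us"
  shows "i < k \<Longrightarrow> us i \<in> carrier_vec n"
    and "i < k \<Longrightarrow> j < k \<Longrightarrow> cinner n (us i) (us j) = (if i = j then 1 else 0)"
  using assms unfolding orthonormal_def by auto

lemma orthonormal_eigenvectorsD:
  assumes "orthonormal_eigenvectors n A k us lam"
  shows "orthonormal n k us" and "i < k \<Longrightarrow> A *\<^sub>v us i = complex_of_real (lam i) \<cdot>\<^sub>v us i"
  using assms unfolding orthonormal_eigenvectors_def by auto

definition orth_proj :: "nat \<Rightarrow> nat \<Rightarrow> (nat \<Rightarrow> complex vec) \<Rightarrow> complex mat" where
  "orth_proj n k us = mat n n (\<lambda>(a, b). \<Sum>i<k. us i $ a * cnj (us i $ b))"

lemma orth_proj_carrier_mat [simp]: "orth_proj n k us \<in> carrier_mat n n"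
  by (simp add: orth_proj_def)

lemma dim_orth_proj [simp]: "dim_row (orth_proj n k us) = n" "dim_col (orth_proj n k us) = n"
  by (simp_all add: orth_proj_def)

lemma orth_proj_mult_vec_index:
  assumes "v \<in> carrier_vec n" "a < n"
  shows "(orth_proj n k us *\<^sub>v v) $ a = (\<Sum>i<k. us i $ a * cinner n (us i) v)"
proof -
  have "(orth_proj n k us *\<^sub>v v) $ a = (\<Sum>b<n. (\<Sum>i<k. us i $ a * cnj (us i $ b)) * v $ b)"
    using mult_mat_vec_index_sum[OF orth_proj_carrier_mat assms] assms by (simp add: orth_proj_def)
  also have "\<dots> = (\<Sum>i<k. \<Sum>b<n. us i $ a * (cnj (us i $ b) * v $ b))"
    by (simp add: sum_distrib_right mult.assoc) (rule sum.swap)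
  finally show ?thesis by (simp add: cinner_def sum_distrib_left)
qed

lemma cinner_orth_proj:
  assumes "orthonormal n k us" "v \<in> carrier_vec n" "j < k"
  shows "cinner n (us j) (orth_proj n k us *\<^sub>v v) = cinner n (us j) v"
proof -
  have "cinner n (us j) (orth_proj n k us *\<^sub>v v)
      = (\<Sum>a<n. cnj (us j $ a) * (\<Sum>i<k. us i $ a * cinner n (us i) v))"
    unfolding cinner_def[of n "us j" "_ *\<^sub>v v"] using assms(2)
    by (intro sum.cong) (auto simp: orth_proj_mult_vec_index simp del: index_mult_mat_vec)
  also have "\<dots> = (\<Sum>i<k. (\<Sum>a<n. cnj (us j $ a) * us i $ a) * cinner n (us i) v)"
    by (simp add: sum_distrib_left sum_distrib_right mult.assoc) (rule sum.swap)
  also have "\<dots> = (\<Sum>i<k. cinner n (us j) (us i) * cinner n (us i) v)"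
    by (simp add: cinner_def)
  also have "\<dots> = (\<Sum>i<k. if j = i then cinner n (us i) v else 0)"
    using orthonormalD(2)[OF assms(1) assms(3)] by (intro sum.cong) auto
  finally show ?thesis using assms(3) by simp
qed

lemma orth_proj_mult_vec_orthogonal:
  assumes "v \<in> carrier_vec n" "\<forall>j<k. cinner n (us j) v = 0"
  shows "orth_proj n k us *\<^sub>v v = 0\<^sub>v n"
  by (rule eq_vecI) (use assms in \<open>auto simp: orth_proj_mult_vec_index simp del: index_mult_mat_vec\<close>)

lemma mtrace_orth_proj:
  assumes "orthonormal n k us"
  shows "mtrace (orth_proj n k us) = of_nat k"
proof -
  have "mtrace (orth_proj n k us) = (\<Sum>i<k. cinner n (us i) (us i))"
    unfolding mtrace_def cinner_def by (simp add: orth_proj_def sum.swap[of _ "{..<n}"] mult.commute)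
  also have "\<dots> = (\<Sum>i<k. 1)" using orthonormalD(2)[OF assms] by (intro sum.cong) auto
  finally show ?thesis by simp
qed

lemma hermitian_eigenvalue_real:
  assumes "hermitian n A" "v \<in> carrier_vec n" "v \<noteq> 0\<^sub>v n" "A *\<^sub>v v = e \<cdot>\<^sub>v v"
  shows "e = complex_of_real (Re e)"
proof -
  have "e * cinner n v v = cnj e * cinner n v v"
    using cinner_hermitian[OF assms(1,2,2)] assms(2,4) by (simp add: cinner_smult_left cinner_smult_right)
  moreover have "cinner n v v \<noteq> 0"
    using cinner_self_pos[OF assms(2,3)] unfolding cinner_self of_real_eq_0_iff by linarith
  ultimately have "cnj e = e" by simp
  then show ?thesis by (auto simp: complex_eq_iff)
qed

lemma cinner_eigenvector_orth_proj_complement: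
  assumes "hermitian n A" "orthonormal_eigenvectors n A k us lam" "v \<in> carrier_vec n" "j < k"
  shows "cinner n (us j) (A *\<^sub>v (v - orth_proj n k us *\<^sub>v v)) = 0"
proof -
  have on: "orthonormal n k us" using assms(2) by (rule orthonormal_eigenvectorsD)
  have u: "us j \<in> carrier_vec n" using orthonormalD(1)[OF on assms(4)] .
  have w: "v - orth_proj n k us *\<^sub>v v \<in> carrier_vec n"
    using assms(3) by (auto intro!: minus_carrier_vec mult_mat_vec_carrier)
  have "cinner n (us j) (A *\<^sub>v (v - orth_proj n k us *\<^sub>v v))
      = cnj (complex_of_real (lam j)) * cinner n (us j) (v - orth_proj n k us *\<^sub>v v)"
    using cinner_hermitian[OF assms(1) u w] orthonormal_eigenvectorsD(2)[OF assms(2,4)] u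
    by (simp add: cinner_smult_left)
  also have "cinner n (us j) (v - orth_proj n k us *\<^sub>v v) = 0"
    using cinner_diff_right[OF assms(3) mult_mat_vec_carrier[OF orth_proj_carrier_mat assms(3)]]
    by (simp add: cinner_orth_proj[OF on assms(3,4)])
  finally show ?thesis by simp
qed

text \<open>The deflated matrix acts as A on the orthogonal complement of the span of the us j and as
  the scalar t on that span. For t as in mtrace_deflate_neq it is not t times the identity, so
  it has an eigenvalue e \<noteq> t, and the eigenvectors for e are orthogonal to the span.\<close>

definition deflate :: "nat \<Rightarrow> complex mat \<Rightarrow> nat \<Rightarrow> (nat \<Rightarrow> complex vec) \<Rightarrow> complex \<Rightarrow> complex mat" where
  "deflate n A k us t = A * (1\<^sub>m n - orth_proj n k us) + t \<cdot>\<^sub>m orth_proj n k us"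

lemma deflate_carrier_mat: "A \<in> carrier_mat n n \<Longrightarrow> deflate n A k us t \<in> carrier_mat n n"
  unfolding deflate_def by (simp add: minus_carrier_mat)

lemma deflate_mult_vec:
  assumes A: "A \<in> carrier_mat n n" and v: "v \<in> carrier_vec n"
  shows "deflate n A k us t *\<^sub>v v
    = A *\<^sub>v (v - orth_proj n k us *\<^sub>v v) + t \<cdot>\<^sub>v (orth_proj n k us *\<^sub>v v)"
proof -
  have P: "1\<^sub>m n - orth_proj n k us \<in> carrier_mat n n" by (simp add: minus_carrier_mat)
  have "deflate n A k us t *\<^sub>v v
      = A *\<^sub>v ((1\<^sub>m n - orth_proj n k us) *\<^sub>v v) + t \<cdot>\<^sub>v (orth_proj n k us *\<^sub>v v)"
    unfolding deflate_def using A P v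
    by (simp add: add_mult_distrib_mat_vec[of _ n n] smult_mat_mult_vec[OF orth_proj_carrier_mat v])
  also have "(1\<^sub>m n - orth_proj n k us) *\<^sub>v v = v - orth_proj n k us *\<^sub>v v"
    using minus_mult_distrib_mat_vec[OF one_carrier_mat orth_proj_carrier_mat v] v by simp
  finally show ?thesis .
qed

lemma cinner_deflate:
  assumes herm: "hermitian n A" and oe: "orthonormal_eigenvectors n A k us lam"
    and v: "v \<in> carrier_vec n" and j: "j < k"
  shows "cinner n (us j) (deflate n A k us t *\<^sub>v v) = t * cinner n (us j) v"
proof -
  have A: "A \<in> carrier_mat n n" using herm by (rule hermitian_carrier_mat)
  have on: "orthonormal n k us" using oe by (rule orthonormal_eigenvectorsD)
  have Rv: "orth_proj n k us *\<^sub>v v \<in> carrier_vec n" using v by (auto intro!: mult_mat_vec_carrier)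
  have "cinner n (us j) (deflate n A k us t *\<^sub>v v)
      = cinner n (us j) (A *\<^sub>v (v - orth_proj n k us *\<^sub>v v)) + t * cinner n (us j) (orth_proj n k us *\<^sub>v v)"
    unfolding deflate_mult_vec[OF A v] using A Rv v
    by (simp add: cinner_add_right[of _ n] cinner_smult_right minus_carrier_vec)
  also have "\<dots> = t * cinner n (us j) v"
    unfolding cinner_orth_proj[OF on v j] cinner_eigenvector_orth_proj_complement[OF herm oe v j]
    by simp
  finally show ?thesis .
qed

lemma mtrace_deflate_neq:
  assumes A: "A \<in> carrier_mat n n" and on: "orthonormal n k us" and "k < n"
  defines "t \<equiv> mtrace (A * (1\<^sub>m n - orth_proj n k us)) / of_nat (n - k) + 1"
  shows "mtrace (deflate n A k us t) \<noteq> of_nat n * t"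
proof
  let ?M = "mtrace (A * (1\<^sub>m n - orth_proj n k us))"
  have P: "1\<^sub>m n - orth_proj n k us \<in> carrier_mat n n" by (simp add: minus_carrier_mat)
  have "mtrace (deflate n A k us t) = ?M + t * mtrace (orth_proj n k us)"
    unfolding mtrace_def deflate_def using A P by (simp add: sum.distrib sum_distrib_left)
  also have "mtrace (orth_proj n k us) = of_nat k" by (rule mtrace_orth_proj[OF on])
  finally have tr: "mtrace (deflate n A k us t) = ?M + t * of_nat k" .
  assume "mtrace (deflate n A k us t) = of_nat n * t"
  then have "?M = of_nat (n - k) * t" using tr \<open>k < n\<close> by (simp add: of_nat_diff algebra_simps)
  moreover have "(of_nat (n - k) :: complex) \<noteq> 0" using \<open>k < n\<close> by simp
  ultimately show False unfolding t_def by (simp add: field_simps)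
qed

lemma hermitian_exists_orthogonal_eigenvector:
  assumes herm: "hermitian n A" and oe: "orthonormal_eigenvectors n A k us lam" and "k < n"
  shows "\<exists>v e. v \<in> carrier_vec n \<and> v \<noteq> 0\<^sub>v n \<and> A *\<^sub>v v = e \<cdot>\<^sub>v v \<and> (\<forall>j<k. cinner n (us j) v = 0)"
proof -
  have A: "A \<in> carrier_mat n n" using herm by (rule hermitian_carrier_mat)
  have on: "orthonormal n k us" using oe by (rule orthonormal_eigenvectorsD)
  define t where "t = mtrace (A * (1\<^sub>m n - orth_proj n k us)) / of_nat (n - k) + 1"
  let ?N = "deflate n A k us t"
  have N: "?N \<in> carrier_mat n n" using A by (rule deflate_carrier_mat)
  obtain e where "eigenvalue ?N e" "e \<noteq> t"
    using exists_eigenvalue_neq[OF N] mtrace_deflate_neq[OF A on \<open>k < n\<close>] unfolding t_def by blast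
  then obtain v where v: "v \<in> carrier_vec n" "v \<noteq> 0\<^sub>v n" "?N *\<^sub>v v = e \<cdot>\<^sub>v v"
    unfolding eigenvalue_def eigenvector_def using N by auto
  have orth: "cinner n (us j) v = 0" if "j < k" for j
  proof -
    have "e * cinner n (us j) v = cinner n (us j) (?N *\<^sub>v v)"
      using v by (simp add: cinner_smult_right)
    also have "\<dots> = t * cinner n (us j) v" by (rule cinner_deflate[OF herm oe v(1) that])
    finally show ?thesis using \<open>e \<noteq> t\<close> by simp
  qed
  then have "orth_proj n k us *\<^sub>v v = 0\<^sub>v n" using v(1) by (simp add: orth_proj_mult_vec_orthogonal)
  moreover have "t \<cdot>\<^sub>v 0\<^sub>v n = 0\<^sub>v n" by auto
  ultimately have "A *\<^sub>v v = e \<cdot>\<^sub>v v" using deflate_mult_vec[OF A v(1)] v A by simp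
  then show ?thesis using v orth by blast
qed

lemma orthonormal_eigenvectors_extend:
  assumes herm: "hermitian n A" and oe: "orthonormal_eigenvectors n A k us lam" and "k < n"
  shows "\<exists>u \<mu>. orthonormal_eigenvectors n A (Suc k) (us(k := u)) (lam(k := \<mu>))"
proof -
  obtain v e where v: "v \<in> carrier_vec n" "v \<noteq> 0\<^sub>v n" "A *\<^sub>v v = e \<cdot>\<^sub>v v"
    and orth: "\<forall>j<k. cinner n (us j) v = 0"
    using hermitian_exists_orthogonal_eigenvector[OF assms] by blast
  define s where "s = (\<Sum>a<n. (cmod (v $ a))\<^sup>2)"
  have s: "s > 0" "cinner n v v = complex_of_real s"
    using cinner_self_pos[OF v(1,2)] cinner_self unfolding s_def by auto
  define u where "u = complex_of_real (1 / sqrt s) \<cdot>\<^sub>v v"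
  have u: "u \<in> carrier_vec n" unfolding u_def using v(1) by simp
  have "A *\<^sub>v u = complex_of_real (Re e) \<cdot>\<^sub>v u"
    unfolding u_def using mult_mat_vec[OF hermitian_carrier_mat[OF herm] v(1)] v(3)
      hermitian_eigenvalue_real[OF herm v] by (simp add: smult_smult_assoc mult.commute)
  moreover have "cinner n u u = 1"
  proof -
    define c where "c = complex_of_real (1 / sqrt s)"
    have "cnj c * c * complex_of_real s = complex_of_real (1 / sqrt s * (1 / sqrt s) * s)"
      unfolding c_def by (simp only: complex_cnj_complex_of_real of_real_mult)
    also have "1 / sqrt s * (1 / sqrt s) * s = 1" using s(1) by (simp add: real_sqrt_mult_self)
    finally show ?thesis
      unfolding u_def c_def[symmetric] using v(1) s(2)
      by (simp add: cinner_smult_left cinner_smult_right mult.assoc mult.left_commute)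
  qed
  moreover have "cinner n (us j) u = 0" "cinner n u (us j) = 0" if "j < k" for j
    using orth that cinner_commute[of n u "us j"] v(1)
    unfolding u_def by (simp_all add: cinner_smult_right cinner_smult_left)
  moreover note orthonormalD[OF orthonormal_eigenvectorsD(1)[OF oe]] orthonormal_eigenvectorsD(2)[OF oe]
  ultimately have "orthonormal_eigenvectors n A (Suc k) (us(k := u)) (lam(k := Re e))"
    unfolding orthonormal_eigenvectors_def orthonormal_def using u by (auto simp: less_Suc_eq)
  then show ?thesis by blast
qed

theorem hermitian_orthonormal_eigenbasis:
  assumes "hermitian n A"
  shows "\<exists>us lam. orthonormal_eigenvectors n A n us lam"
proof -
  have "\<exists>us lam. orthonormal_eigenvectors n A k us lam" if "k \<le> n" for k
    using that
  proof (induction k)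
    case 0
    show ?case by (auto simp: orthonormal_eigenvectors_def orthonormal_def)
  next
    case (Suc k)
    then obtain us lam where "orthonormal_eigenvectors n A k us lam" by auto
    with orthonormal_eigenvectors_extend[OF assms] Suc.prems show ?case by (blast dest: Suc_le_lessD)
  qed
  then show ?thesis by simp
qed

section \<open>Consequences of an orthonormal eigenbasis\<close>

definition basis_mat :: "nat \<Rightarrow> (nat \<Rightarrow> complex vec) \<Rightarrow> complex mat" where
  "basis_mat n us = mat n n (\<lambda>(a, i). us i $ a)"

definition basis_mat_adjoint :: "nat \<Rightarrow> (nat \<Rightarrow> complex vec) \<Rightarrow> complex mat" where
  "basis_mat_adjoint n us = mat n n (\<lambda>(i, a). cnj (us i $ a))"

lemma dim_basis_mat [simp]:
  "dim_row (basis_mat n us) = n" "dim_col (basis_mat n us) = n"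
  "dim_row (basis_mat_adjoint n us) = n" "dim_col (basis_mat_adjoint n us) = n"
  by (simp_all add: basis_mat_def basis_mat_adjoint_def)

lemma basis_mat_carrier_mat [simp]: "basis_mat n us \<in> carrier_mat n n"
  by (simp add: carrier_matI)

lemma basis_mat_adjoint_carrier_mat [simp]: "basis_mat_adjoint n us \<in> carrier_mat n n"
  by (simp add: carrier_matI)

lemma basis_mat_adjoint_mult_basis_mat:
  assumes "orthonormal n n us"
  shows "basis_mat_adjoint n us * basis_mat n us = 1\<^sub>m n"
proof (rule eq_matI)
  fix i j assume "i < dim_row (1\<^sub>m n :: complex mat)" "j < dim_col (1\<^sub>m n :: complex mat)"
  then have ij: "i < n" "j < n" by auto
  have "(basis_mat_adjoint n us * basis_mat n us) $$ (i, j)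
      = (\<Sum>c<n. basis_mat_adjoint n us $$ (i, c) * basis_mat n us $$ (c, j))"
    by (rule mult_mat_index_sum[OF basis_mat_adjoint_carrier_mat basis_mat_carrier_mat ij])
  also have "\<dots> = cinner n (us i) (us j)"
    using ij by (simp add: cinner_def basis_mat_def basis_mat_adjoint_def)
  finally show "(basis_mat_adjoint n us * basis_mat n us) $$ (i, j) = 1\<^sub>m n $$ (i, j)"
    using orthonormalD(2)[OF assms ij] ij by simp
qed auto

lemma basis_mat_mult_basis_mat_adjoint:
  assumes "orthonormal n n us"
  shows "basis_mat n us * basis_mat_adjoint n us = 1\<^sub>m n"
  by (rule mat_mult_left_right_inverse[OF basis_mat_adjoint_carrier_mat basis_mat_carrier_mat
        basis_mat_adjoint_mult_basis_mat[OF assms]])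

lemma orth_proj_orthonormal_basis:
  assumes "orthonormal n n us"
  shows "orth_proj n n us = 1\<^sub>m n"
proof (rule eq_matI)
  fix a b assume "a < dim_row (1\<^sub>m n :: complex mat)" "b < dim_col (1\<^sub>m n :: complex mat)"
  then have ab: "a < n" "b < n" by auto
  have "(basis_mat n us * basis_mat_adjoint n us) $$ (a, b)
      = (\<Sum>i<n. basis_mat n us $$ (a, i) * basis_mat_adjoint n us $$ (i, b))"
    by (rule mult_mat_index_sum[OF basis_mat_carrier_mat basis_mat_adjoint_carrier_mat ab])
  also have "\<dots> = orth_proj n n us $$ (a, b)"
    using ab by (simp add: orth_proj_def basis_mat_def basis_mat_adjoint_def)
  finally show "orth_proj n n us $$ (a, b) = 1\<^sub>m n $$ (a, b)"
    using basis_mat_mult_basis_mat_adjoint[OF assms] by simp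
qed auto

context
  fixes n :: nat and A :: "complex mat" and us :: "nat \<Rightarrow> complex vec" and lam :: "nat \<Rightarrow> real"
  assumes A: "A \<in> carrier_mat n n" and eigenbasis: "orthonormal_eigenvectors n A n us lam"
begin

lemma eigenbasis_index:
  assumes ab: "a < n" "b < n"
  shows "A $$ (a, b) = (\<Sum>i<n. complex_of_real (lam i) * us i $ a * cnj (us i $ b))"
proof -
  have on: "orthonormal n n us" using eigenbasis by (rule orthonormal_eigenvectorsD)
  have "A $$ (a, b) = (A * orth_proj n n us) $$ (a, b)"
    using A by (simp add: orth_proj_orthonormal_basis[OF on])
  also have "\<dots> = (\<Sum>c<n. A $$ (a, c) * (\<Sum>i<n. us i $ c * cnj (us i $ b)))"
    unfolding mult_mat_index_sum[OF A orth_proj_carrier_mat ab] using ab by (simp add: orth_proj_def)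
  also have "\<dots> = (\<Sum>i<n. (\<Sum>c<n. A $$ (a, c) * us i $ c) * cnj (us i $ b))"
    by (simp add: sum_distrib_left sum_distrib_right mult.assoc) (rule sum.swap)
  also have "\<dots> = (\<Sum>i<n. (A *\<^sub>v us i) $ a * cnj (us i $ b))"
    using ab A orthonormalD(1)[OF on] by (simp add: mult_mat_vec_index_sum del: index_mult_mat_vec)
  also have "\<dots> = (\<Sum>i<n. complex_of_real (lam i) * us i $ a * cnj (us i $ b))"
    using ab orthonormal_eigenvectorsD(2)[OF eigenbasis]
    by (intro sum.cong) (auto simp: orthonormalD(1)[OF on, THEN carrier_vecD])
  finally show ?thesis .
qed

lemma eigenbasis_mult_vec_index:
  assumes v: "v \<in> carrier_vec n" and a: "a < n"
  shows "(A *\<^sub>v v) $ a = (\<Sum>i<n. complex_of_real (lam i) * cinner n (us i) v * us i $ a)"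
proof -
  have "(A *\<^sub>v v) $ a = (\<Sum>b<n. \<Sum>i<n. complex_of_real (lam i) * us i $ a * (cnj (us i $ b) * v $ b))"
    using a by (simp add: mult_mat_vec_index_sum[OF A v a] eigenbasis_index sum_distrib_right
        mult.assoc del: index_mult_mat_vec)
  also have "\<dots> = (\<Sum>i<n. complex_of_real (lam i) * cinner n (us i) v * us i $ a)"
    by (subst sum.swap) (simp add: cinner_def sum_distrib_left mult_ac)
  finally show ?thesis .
qed

lemma eigenbasis_quadratic_form:
  assumes v: "v \<in> carrier_vec n"
  shows "cinner n v (A *\<^sub>v v) = complex_of_real (\<Sum>i<n. lam i * (cmod (cinner n (us i) v))\<^sup>2)"
proof -
  have "cinner n v (A *\<^sub>v v) = (\<Sum>i<n. complex_of_real (lam i) * cinner n (us i) v * cinner n v (us i))"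
    unfolding cinner_def[of n v]
    by (simp add: eigenbasis_mult_vec_index[OF v] sum_distrib_left mult_ac del: index_mult_mat_vec)
      (rule sum.swap)
  also have "\<dots> = complex_of_real (\<Sum>i<n. lam i * (cmod (cinner n (us i) v))\<^sup>2)"
    unfolding of_real_sum cinner_commute[of n v]
    by (simp only: of_real_mult complex_norm_square mult.assoc)
  finally show ?thesis .
qed

lemma eigenbasis_mtrace: "mtrace A = complex_of_real (\<Sum>i<n. lam i)"
proof -
  have on: "orthonormal n n us" using eigenbasis by (rule orthonormal_eigenvectorsD)
  have "mtrace A = (\<Sum>a<n. \<Sum>i<n. complex_of_real (lam i) * us i $ a * cnj (us i $ a))"
    unfolding mtrace_def using A by (simp add: eigenbasis_index)
  also have "\<dots> = (\<Sum>i<n. complex_of_real (lam i) * cinner n (us i) (us i))"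
    unfolding cinner_def by (subst sum.swap) (simp add: sum_distrib_left mult_ac)
  also have "\<dots> = (\<Sum>i<n. complex_of_real (lam i))"
    using orthonormalD(2)[OF on] by (intro sum.cong) auto
  finally show ?thesis by simp
qed

lemma eigenbasis_eq_zero: "\<forall>i<n. lam i = 0 \<Longrightarrow> A = 0\<^sub>m n n"
  by (rule eq_matI) (use A in \<open>auto simp: eigenbasis_index\<close>)

lemma eigenbasis_char_poly:
  "char_poly A = (\<Prod>x\<leftarrow>map (\<lambda>i. complex_of_real (lam i)) [0..<n]. [:- x, 1:])"
proof -
  have on: "orthonormal n n us" using eigenbasis by (rule orthonormal_eigenvectorsD)
  define D where "D = mat_diag n (\<lambda>i. complex_of_real (lam i))"
  have D: "D \<in> carrier_mat n n" unfolding D_def by simp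
  have "A = basis_mat n us * D * basis_mat_adjoint n us"
  proof (rule eq_matI)
    fix a b assume "a < dim_row (basis_mat n us * D * basis_mat_adjoint n us)"
      "b < dim_col (basis_mat n us * D * basis_mat_adjoint n us)"
    then have ab: "a < n" "b < n" by auto
    have "basis_mat n us * D = mat n n (\<lambda>(a, i). us i $ a * complex_of_real (lam i))"
      unfolding D_def by (rule eq_matI) (auto simp: mat_diag_mult_right[of _ n] basis_mat_def)
    then show "A $$ (a, b) = (basis_mat n us * D * basis_mat_adjoint n us) $$ (a, b)"
      using ab by (simp add: mult_mat_index_sum[of _ n n _ n] eigenbasis_index basis_mat_adjoint_def
          mult_ac del: index_mult_mat)
  qed (use A in auto)
  then have "similar_mat A D"
    using similar_matI[of A D "basis_mat n us" "basis_mat_adjoint n us" n] A D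
      basis_mat_mult_basis_mat_adjoint[OF on] basis_mat_adjoint_mult_basis_mat[OF on] by auto
  then have "char_poly A = char_poly D" by (rule char_poly_similar)
  also have "\<dots> = (\<Prod>a\<leftarrow>diag_mat D. [:- a, 1:])"
    by (rule char_poly_upper_triangular[OF D]) (auto simp: upper_triangular_def D_def mat_diag_def)
  also have "diag_mat D = map (\<lambda>i. complex_of_real (lam i)) [0..<n]"
    by (auto simp: diag_mat_def D_def mat_diag_def)
  finally show ?thesis .
qed

end

lemma order_prod_linear_factors:
  "Polynomial.order a (\<Prod>x\<leftarrow>map c [0..<n]. [:- x, 1::complex:]) = card {i. i < n \<and> c i = a}"
proof -
  have "Polynomial.order a (\<Prod>x\<leftarrow>map c [0..<n]. [:- x, 1::complex:]) = (\<Sum>i<n. if c i = a then 1 else 0)"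
    by (subst order_prod_list)
      (auto simp: order_linear' o_def sum_set_upt_conv_sum_list_nat[symmetric] atLeast0LessThan)
  also have "\<dots> = card {i. i < n \<and> c i = a}"
    by (simp add: sum.If_cases lessThan_def Collect_conj_eq)
  finally show ?thesis .
qed

lemma num_pos_eigenvalues_eq_card:
  assumes "char_poly A = (\<Prod>x\<leftarrow>map (\<lambda>i. complex_of_real (lam i)) [0..<n]. [:- x, 1:])"
  shows "num_pos_eigenvalues A = card {i. i < n \<and> lam i > 0}"
proof -
  define c where "c = (\<lambda>i. complex_of_real (lam i))"
  define I where "I = {i. i < n \<and> lam i > 0}"
  have "{a. poly (char_poly A) a = 0 \<and> a \<in> \<real> \<and> 0 < Re a} = c ` I"
    unfolding assms poly_prod_list_zero_iff I_def c_def by auto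
  then have "num_pos_eigenvalues A = (\<Sum>a\<in>c ` I. card {i\<in>I. c i = a})"
    unfolding num_pos_eigenvalues_def assms c_def order_prod_linear_factors
    by (auto simp: I_def intro!: sum.cong arg_cong[where f = card])
  also have "\<dots> = card (\<Union>a\<in>c ` I. {i\<in>I. c i = a})"
    by (rule card_UN_disjoint[symmetric]) (auto simp: I_def)
  also have "(\<Union>a\<in>c ` I. {i\<in>I. c i = a}) = I" by auto
  finally show ?thesis unfolding I_def .
qed

section \<open>Matrices of rank at most one and pure states\<close>

lemma (in vec_space) lin_indpt_singleton:
  assumes "c \<in> carrier_vec n" "c \<noteq> 0\<^sub>v n"
  shows "\<not> lin_dep {c}"
proof -
  have "\<not> lin_dep {}" unfolding lin_dep_def by blast
  moreover have "c \<notin> span {}" using assms(2) span_empty by simp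
  ultimately show ?thesis using lin_dep_iff_in_span[of "{}" c] assms(1) by auto
qed

lemma (in vec_space) col_in_span_of_rank_le_1:
  assumes A: "A \<in> carrier_mat n nc" and r: "rank A \<le> 1"
    and c: "c \<in> set (cols A)" "c \<noteq> 0\<^sub>v n" and d: "d \<in> set (cols A)"
  shows "\<exists>a. d = a \<cdot>\<^sub>v c"
proof -
  have cols: "set (cols A) \<subseteq> carrier_vec n" using cols_dim[of A] A by simp
  have indpt_c: "\<not> lin_dep {c}" using lin_indpt_singleton c cols by auto
  have "d \<in> span {c}"
  proof (rule ccontr)
    assume d_notin: "d \<notin> span {c}"
    then have "d \<noteq> c" using span_self[of c] c cols by auto
    have "\<not> lin_dep ({c} \<union> {d})"
      using lin_dep_iff_in_span[of "{c}" d] indpt_c d_notin \<open>d \<noteq> c\<close> c d cols by auto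
    then have "rank A \<ge> card {c, d}" using rank_ge_card_indpt[OF A, of "{c, d}"] c d
      by (simp add: insert_commute)
    then show False using r \<open>d \<noteq> c\<close> by simp
  qed
  then obtain a where "lincomb a {c} = d" using finite_in_span[of "{c}" d] c cols by auto
  then have "d = a c \<cdot>\<^sub>v c" using c cols by (auto simp: lincomb_index intro!: eq_vecI)
  then show ?thesis by blast
qed

lemma rank_le_1_product_entries_exist:
  assumes A: "(A :: complex mat) \<in> carrier_mat n nc" and r: "vec_space.rank n A \<le> 1"
  shows "\<exists>w g. \<forall>x<n. \<forall>y<nc. A $$ (x, y) = w $ x * g y"
proof (cases "\<exists>y<nc. col A y \<noteq> 0\<^sub>v n")
  case True
  then obtain y0 where y0: "y0 < nc" "col A y0 \<noteq> 0\<^sub>v n" by blast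
  have "\<exists>a. col A y = a \<cdot>\<^sub>v col A y0" if "y < nc" for y
    using vec_space.col_in_span_of_rank_le_1[OF A r _ y0(2)] y0(1) that A by (simp add: cols_def)
  then obtain g where g: "\<And>y. y < nc \<Longrightarrow> col A y = g y \<cdot>\<^sub>v col A y0" by metis
  have "A $$ (x, y) = col A y0 $ x * g y" if "x < n" "y < nc" for x y
  proof -
    have "A $$ (x, y) = col A y $ x" using that A by simp
    also have "\<dots> = col A y0 $ x * g y" using g[OF that(2)] that A by simp
    finally show ?thesis .
  qed
  then show ?thesis by blast
next
  case False
  have "A $$ (x, y) = 0\<^sub>v n $ x * 0" if "x < n" "y < nc" for x y
  proof -
    have "A $$ (x, y) = col A y $ x" using that A by simp
    then show ?thesis using False that by simp
  qed
  then show ?thesis by (intro exI[of _ "0\<^sub>v n"] exI[of _ "\<lambda>_. 0"]) blast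
qed

lemma hermitian_smult_real:
  assumes "hermitian n A"
  shows "hermitian n (complex_of_real r \<cdot>\<^sub>m A)"
proof (rule hermitianI)
  show "complex_of_real r \<cdot>\<^sub>m A \<in> carrier_mat n n"
    using hermitian_carrier_mat[OF assms] by simp
  fix i j assume "i < n" "j < n"
  then show "(complex_of_real r \<cdot>\<^sub>m A) $$ (i, j) = cnj ((complex_of_real r \<cdot>\<^sub>m A) $$ (j, i))"
    using hermitian_carrier_mat[OF assms] hermitian_cnj_entry[OF assms \<open>i < n\<close> \<open>j < n\<close>] by simp
qed

lemma hermitian_orth_proj: "hermitian n (orth_proj n k us)"
  by (rule hermitianI) (auto simp: orth_proj_def mult.commute)

lemma orth_proj_quadratic_form:
  assumes "v \<in> carrier_vec n"
  shows "cinner n v (orth_proj n k us *\<^sub>v v) = complex_of_real (\<Sum>i<k. (cmod (cinner n (us i) v))\<^sup>2)"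
proof -
  have "cinner n v (orth_proj n k us *\<^sub>v v)
      = (\<Sum>a<n. cnj (v $ a) * (\<Sum>i<k. us i $ a * cinner n (us i) v))"
    unfolding cinner_def[of n v "orth_proj n k us *\<^sub>v v"] using assms
    by (intro sum.cong) (auto simp: orth_proj_mult_vec_index simp del: index_mult_mat_vec)
  also have "\<dots> = (\<Sum>i<k. (\<Sum>a<n. cnj (v $ a) * us i $ a) * cinner n (us i) v)"
    by (simp add: sum_distrib_left sum_distrib_right mult.assoc) (rule sum.swap)
  also have "\<dots> = (\<Sum>i<k. cnj (cinner n (us i) v) * cinner n (us i) v)"
    using cinner_commute[of n v] by (simp add: cinner_def)
  also have "\<dots> = complex_of_real (\<Sum>i<k. (cmod (cinner n (us i) v))\<^sup>2)"
    unfolding of_real_sum by (simp only: complex_norm_square mult.commute)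
  finally show ?thesis .
qed

lemma psd_orth_proj: "psd n (orth_proj n k us)"
  unfolding psd_iff_cinner using hermitian_orth_proj orth_proj_quadratic_form
  by (simp add: sum_nonneg)

lemma rank_orth_proj_single:
  assumes "\<psi> \<in> carrier_vec n" "\<psi> \<noteq> 0\<^sub>v n"
  shows "vec_space.rank n (orth_proj n 1 (\<lambda>_. \<psi>)) = 1"
proof -
  interpret vec_space "TYPE(complex)" n .
  let ?P = "orth_proj n 1 (\<lambda>_. \<psi>)"
  have "rank ?P \<le> 1"
    by (rule rank_le_1_product_entries[OF orth_proj_carrier_mat,
          where f = "\<lambda>a. \<psi> $ a" and g = "\<lambda>b. cnj (\<psi> $ b)"])
      (simp add: orth_proj_def)
  obtain b where b: "b < n" "\<psi> $ b \<noteq> 0"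
    using nonzero_vec_index[OF assms] by blast
  have "col ?P b $ b \<noteq> 0" using b by (simp add: orth_proj_def)
  then have "col ?P b \<noteq> 0\<^sub>v n" using b(1) by (metis index_zero_vec(1))
  then have "\<not> lin_dep {col ?P b}" using b by (intro lin_indpt_singleton) simp_all
  moreover have "col ?P b \<in> set (cols ?P)" using b by (simp add: cols_def)
  ultimately have "rank ?P \<ge> card {col ?P b}"
    by (intro rank_ge_card_indpt[OF orth_proj_carrier_mat]) simp_all
  with \<open>rank ?P \<le> 1\<close> show ?thesis by simp
qed

lemma is_pure_state_orth_proj_single:
  assumes "\<psi> \<in> carrier_vec n" "cinner n \<psi> \<psi> = 1"
  shows "is_pure_state n (orth_proj n 1 (\<lambda>_. \<psi>))"
proof -
  have "orthonormal n 1 (\<lambda>_. \<psi>)" using assms by (simp add: orthonormal_def)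
  moreover have "\<psi> \<noteq> 0\<^sub>v n" using assms(2) by auto
  ultimately show ?thesis
    unfolding is_pure_state_def is_state_def
    using psd_orth_proj mtrace_orth_proj rank_orth_proj_single[OF assms(1)] by simp
qed

section \<open>Determination of pure states\<close>

lemma cinner_eigenvector_combination:
  fixes a b :: complex
  assumes A: "A \<in> carrier_mat n n" and oe: "orthonormal_eigenvectors n A k us lam"
    and ij: "i < k" "j < k" "i \<noteq> j"
  defines "v \<equiv> a \<cdot>\<^sub>v us i + b \<cdot>\<^sub>v us j"
  shows "cinner n v (A *\<^sub>v v) = complex_of_real ((cmod a)\<^sup>2 * lam i + (cmod b)\<^sup>2 * lam j)"
proof -
  have on: "orthonormal n k us" using oe by (rule orthonormal_eigenvectorsD)
  have ui: "us i \<in> carrier_vec n" and uj: "us j \<in> carrier_vec n" using orthonormalD(1)[OF on] ij by auto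
  have "A *\<^sub>v v = (a * complex_of_real (lam i)) \<cdot>\<^sub>v us i + (b * complex_of_real (lam j)) \<cdot>\<^sub>v us j"
    unfolding v_def using A ui uj orthonormal_eigenvectorsD(2)[OF oe] ij
    by (simp add: mult_add_distrib_mat_vec[of _ n n] mult_mat_vec smult_smult_assoc)
  then have "cinner n v (A *\<^sub>v v)
      = cnj a * a * complex_of_real (lam i) + cnj b * b * complex_of_real (lam j)"
    unfolding v_def using ui uj orthonormalD(2)[OF on] ij
    by (simp add: cinner_add_left cinner_add_right cinner_smult_left cinner_smult_right mult.assoc)
  also have "\<dots> = complex_of_real ((cmod a)\<^sup>2 * lam i + (cmod b)\<^sup>2 * lam j)"
    by (simp only: of_real_add of_real_mult complex_norm_square mult_ac)
  finally show ?thesis .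
qed

lemma rank_le_1_kernel_meets_plane:
  fixes S :: "complex mat"
  assumes S: "S \<in> carrier_mat n n" and r: "vec_space.rank n S \<le> 1"
    and u: "u \<in> carrier_vec n" "u' \<in> carrier_vec n"
  shows "\<exists>a b. (a \<noteq> 0 \<or> b \<noteq> 0) \<and> S *\<^sub>v (a \<cdot>\<^sub>v u + b \<cdot>\<^sub>v u') = 0\<^sub>v n"
proof -
  obtain w g where wg: "\<And>x y. x < n \<Longrightarrow> y < n \<Longrightarrow> S $$ (x, y) = w $ x * g y"
    using rank_le_1_product_entries_exist[OF S r] by blast
  define \<alpha> where "\<alpha> = (\<Sum>y<n. g y * u $ y)"
  define \<beta> where "\<beta> = (\<Sum>y<n. g y * u' $ y)"
  define a where "a = (if \<alpha> = 0 \<and> \<beta> = 0 then 1 else \<beta>)"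
  define b where "b = (if \<alpha> = 0 \<and> \<beta> = 0 then 0 else - \<alpha>)"
  have "S *\<^sub>v (a \<cdot>\<^sub>v u + b \<cdot>\<^sub>v u') = 0\<^sub>v n"
  proof (rule eq_vecI)
    fix x assume "x < dim_vec (0\<^sub>v n :: complex vec)"
    then have x: "x < n" by simp
    have "(S *\<^sub>v (a \<cdot>\<^sub>v u + b \<cdot>\<^sub>v u')) $ x = w $ x * (a * \<alpha> + b * \<beta>)"
      using x u by (simp add: mult_mat_vec_index_sum[OF S _ x] wg \<alpha>_def \<beta>_def sum_distrib_left
          sum.distrib algebra_simps del: index_mult_mat_vec)
    also have "a * \<alpha> + b * \<beta> = 0" unfolding a_def b_def by (auto simp: algebra_simps)
    finally show "(S *\<^sub>v (a \<cdot>\<^sub>v u + b \<cdot>\<^sub>v u')) $ x = 0\<^sub>v n $ x" using x by simp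
  qed (use S in simp)
  moreover have "a \<noteq> 0 \<or> b \<noteq> 0" unfolding a_def b_def by auto
  ultimately show ?thesis by blast
qed

lemma exists_positive_vector_in_kernel:
  assumes A: "A \<in> carrier_mat n n" and eb: "orthonormal_eigenvectors n A n us lam"
    and two: "2 \<le> card {i. i < n \<and> lam i > 0}"
    and S: "S \<in> carrier_mat n n" "vec_space.rank n S \<le> 1"
  shows "\<exists>v \<in> carrier_vec n. S *\<^sub>v v = 0\<^sub>v n \<and> Re (cinner n v (A *\<^sub>v v)) > 0"
proof -
  have "\<not> (\<forall>i \<in> {i. i < n \<and> lam i > 0}. \<forall>j \<in> {i. i < n \<and> lam i > 0}. i = j)"
    using two card_le_Suc0_iff_eq[of "{i. i < n \<and> lam i > 0}"] by auto
  then obtain i j where ij: "i < n" "j < n" "i \<noteq> j" "lam i > 0" "lam j > 0" by auto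
  have on: "orthonormal n n us" using eb by (rule orthonormal_eigenvectorsD)
  have u: "us i \<in> carrier_vec n" "us j \<in> carrier_vec n" using orthonormalD(1)[OF on] ij by auto
  obtain a b where ab: "a \<noteq> 0 \<or> b \<noteq> 0" "S *\<^sub>v (a \<cdot>\<^sub>v us i + b \<cdot>\<^sub>v us j) = 0\<^sub>v n"
    using rank_le_1_kernel_meets_plane[OF S u] by blast
  have "(cmod a)\<^sup>2 * lam i + (cmod b)\<^sup>2 * lam j > 0"
    using ab(1) ij by (auto intro: add_pos_nonneg add_nonneg_pos)
  then show ?thesis
    using ab(2) u cinner_eigenvector_combination[OF A eb ij(1-3), of a b] by auto
qed

lemma povm_carrier_mat: "is_povm d m P \<Longrightarrow> j < m \<Longrightarrow> P j \<in> carrier_mat d d"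
  unfolding is_povm_def psd_def by (auto intro: hermitian_carrier_mat)

lemma dim_M_Q [simp]: "dim_row (M_Q l m Q X) = l" "dim_col (M_Q l m Q X) = m"
  by (simp_all add: M_Q_def)

lemma M_Q_diff_smult_index:
  assumes QP: "\<forall>i<l. is_povm d m (Q i)" and A: "A \<in> carrier_mat d d" and B: "B \<in> carrier_mat d d"
    and ij: "i < l" "j < m"
  shows "M_Q l m Q (A - complex_of_real r \<cdot>\<^sub>m B) $$ (i, j)
    = M_Q l m Q A $$ (i, j) - r * M_Q l m Q B $$ (i, j)"
  using ij mtrace_diff_smult_mult[OF A B povm_carrier_mat[of d m "Q i" j]] QP
  by (simp add: M_Q_def)

lemma diff_in_ker_M_Q:
  assumes QP: "\<forall>i<l. is_povm d m (Q i)" and h: "hermitian d A" "hermitian d B"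
    and eq: "M_Q l m Q A = M_Q l m Q B"
  shows "A - B \<in> ker_M_Q d l m Q"
proof -
  have A: "A \<in> carrier_mat d d" and B: "B \<in> carrier_mat d d" using h hermitian_carrier_mat by auto
  have AB: "A - 1 \<cdot>\<^sub>m B = A - B" by (rule eq_matI) (use A B in auto)
  have "M_Q l m Q (A - B) $$ (i, j) = 0" if "i < l" "j < m" for i j
    using M_Q_diff_smult_index[OF QP A B that, of 1] eq AB by simp
  then have "M_Q l m Q (A - B) = 0\<^sub>m l m" by (intro eq_matI) auto
  then show ?thesis unfolding ker_M_Q_def using hermitian_minus[OF h] by simp
qed

lemma M_Q_diff_smult_ker:
  assumes QP: "\<forall>i<l. is_povm d m (Q i)" and A: "A \<in> carrier_mat d d" and X: "X \<in> ker_M_Q d l m Q"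
  shows "M_Q l m Q (A - complex_of_real r \<cdot>\<^sub>m X) = M_Q l m Q A"
proof -
  have X': "X \<in> carrier_mat d d" and MX: "M_Q l m Q X = 0\<^sub>m l m"
    using X hermitian_carrier_mat unfolding ker_M_Q_def by auto
  have "M_Q l m Q X $$ (i, j) = 0" if "i < l" "j < m" for i j using MX that by simp
  then show ?thesis
    by (intro eq_matI) (auto simp: M_Q_diff_smult_index[OF QP A X'])
qed

lemma determines_pure_states_if_two_positive:
  assumes QP: "\<forall>i<l. is_povm d m (Q i)"
    and two: "\<forall>X \<in> ker_M_Q d l m Q. X \<noteq> 0\<^sub>m d d \<longrightarrow> num_pos_eigenvalues X \<ge> 2"
  shows "determines_pure_states d l m Q"
  unfolding determines_pure_states_def
proof (intro allI impI)
  fix \<sigma> \<rho> assume pure: "is_pure_state d \<sigma>" and st: "is_state d \<rho>"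
    and eq: "M_Q l m Q \<sigma> = M_Q l m Q \<rho>"
  have h: "hermitian d \<sigma>" "hermitian d \<rho>" and psd\<rho>: "psd d \<rho>" and rk: "vec_space.rank d \<sigma> = 1"
    using pure st unfolding is_pure_state_def is_state_def psd_def by blast+
  have S: "\<sigma> \<in> carrier_mat d d" and R: "\<rho> \<in> carrier_mat d d" using h hermitian_carrier_mat by auto
  define Y where "Y = \<sigma> - \<rho>"
  have Yker: "Y \<in> ker_M_Q d l m Q" unfolding Y_def by (rule diff_in_ker_M_Q[OF QP h eq])
  have Y: "Y \<in> carrier_mat d d" unfolding Y_def using R by (simp add: minus_carrier_mat)
  show "\<rho> = \<sigma>"
  proof (rule ccontr)
    assume "\<rho> \<noteq> \<sigma>"
    moreover have "\<rho> = \<sigma>" if "Y = 0\<^sub>m d d"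
    proof (rule eq_matI)
      fix a b assume "a < dim_row \<sigma>" "b < dim_col \<sigma>"
      then have "Y $$ (a, b) = 0" using S that by simp
      then show "\<rho> $$ (a, b) = \<sigma> $$ (a, b)" using S R \<open>a < dim_row \<sigma>\<close> \<open>b < dim_col \<sigma>\<close>
        unfolding Y_def by simp
    qed (use S R in auto)
    ultimately have "Y \<noteq> 0\<^sub>m d d" by blast
    then have "num_pos_eigenvalues Y \<ge> 2" using two Yker by blast
    obtain us lam where eb: "orthonormal_eigenvectors d Y d us lam"
      using hermitian_orthonormal_eigenbasis[of d Y] Yker unfolding ker_M_Q_def by blast
    have "2 \<le> card {i. i < d \<and> lam i > 0}"
      using \<open>num_pos_eigenvalues Y \<ge> 2\<close> num_pos_eigenvalues_eq_card[OF eigenbasis_char_poly[OF Y eb]]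
      by simp
    then obtain v where v: "v \<in> carrier_vec d" "\<sigma> *\<^sub>v v = 0\<^sub>v d" "Re (cinner d v (Y *\<^sub>v v)) > 0"
      using exists_positive_vector_in_kernel[OF Y eb _ S] rk by auto
    have "cinner d v (Y *\<^sub>v v) = - cinner d v (\<rho> *\<^sub>v v)"
      unfolding Y_def using S R v by (simp add: minus_mult_distrib_mat_vec cinner_uminus_right)
    moreover have "0 \<le> Re (cinner d v (\<rho> *\<^sub>v v))" using psd\<rho> v(1) unfolding psd_iff_cinner by blast
    ultimately show False using v(3) by simp
  qed
qed

lemma mtrace_eq_sum_povm:
  assumes P: "is_povm d m P" and X: "X \<in> carrier_mat d d"
  shows "mtrace X = (\<Sum>j<m. mtrace (X * P j))"
proof -
  have "(\<Sum>j<m. mtrace (X * P j)) = (\<Sum>j<m. \<Sum>a<d. \<Sum>c<d. X $$ (a, c) * P j $$ (c, a))"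
    using P X by (simp add: mtrace_mult povm_carrier_mat)
  also have "\<dots> = (\<Sum>a<d. \<Sum>c<d. X $$ (a, c) * (\<Sum>j<m. P j $$ (c, a)))"
    by (simp add: sum_distrib_left sum.swap[of _ "{..<m}"])
  also have "\<dots> = (\<Sum>a<d. \<Sum>c<d. if c = a then X $$ (a, c) else 0)"
    using P unfolding is_povm_def by (intro sum.cong) auto
  also have "\<dots> = mtrace X" using X by (simp add: mtrace_def)
  finally show ?thesis ..
qed

lemma Re_mtrace_ker_M_Q:
  assumes l: "1 \<le> l" and QP: "\<forall>i<l. is_povm d m (Q i)" and X: "X \<in> ker_M_Q d l m Q"
  shows "Re (mtrace X) = 0"
proof -
  have Xc: "X \<in> carrier_mat d d" and MX: "M_Q l m Q X = 0\<^sub>m l m"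
    using X hermitian_carrier_mat unfolding ker_M_Q_def by auto
  have "Re (mtrace (X * Q 0 j)) = M_Q l m Q X $$ (0, j)" if "j < m" for j
    using l that by (simp add: M_Q_def)
  then show ?thesis
    using mtrace_eq_sum_povm[OF _ Xc, of m "Q 0"] QP l MX by (simp add: Re_sum)
qed

lemma is_state_subtract_single_positive:
  assumes hX: "hermitian d X" and eb: "orthonormal_eigenvectors d X d us lam"
    and tr: "mtrace X = 0" and p: "p < d" "lam p > 0"
    and nonpos: "\<forall>i<d. i \<noteq> p \<longrightarrow> lam i \<le> 0"
  shows "is_state d (orth_proj d 1 (\<lambda>_. us p) - complex_of_real (1 / lam p) \<cdot>\<^sub>m X)"
    (is "is_state d (?\<sigma> - ?c \<cdot>\<^sub>m X)")
proof -
  have Xc: "X \<in> carrier_mat d d" using hX by (rule hermitian_carrier_mat)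
  have "0 \<le> Re (cinner d v ((?\<sigma> - ?c \<cdot>\<^sub>m X) *\<^sub>v v))" if v: "v \<in> carrier_vec d" for v
  proof -
    let ?w = "\<lambda>i. (cmod (cinner d (us i) v))\<^sup>2"
    have "(\<Sum>i<d. lam i * ?w i) = lam p * ?w p + (\<Sum>i\<in>{..<d} - {p}. lam i * ?w i)"
      using p by (simp add: sum.remove)
    also have "(\<Sum>i\<in>{..<d} - {p}. lam i * ?w i) \<le> 0"
      using nonpos by (intro sum_nonpos) (simp add: mult_nonpos_nonneg)
    finally have "(1 / lam p) * (\<Sum>i<d. lam i * ?w i) \<le> ?w p"
      using p by (simp add: field_simps)
    moreover have "cinner d v ((?\<sigma> - ?c \<cdot>\<^sub>m X) *\<^sub>v v)
        = cinner d v (?\<sigma> *\<^sub>v v) - ?c * cinner d v (X *\<^sub>v v)"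
    proof -
      have "?\<sigma> *\<^sub>v v \<in> carrier_vec d" "?c \<cdot>\<^sub>v (X *\<^sub>v v) \<in> carrier_vec d"
        using Xc v by (auto intro!: mult_mat_vec_carrier)
      then show ?thesis
        using minus_mult_distrib_mat_vec[OF orth_proj_carrier_mat smult_carrier_mat[OF Xc] v]
          smult_mat_mult_vec[OF Xc v] cinner_smult_right[OF mult_mat_vec_carrier[OF Xc v]]
        by (simp add: cinner_diff_right del: of_real_divide)
    qed
    ultimately show ?thesis
      using v by (simp add: orth_proj_quadratic_form eigenbasis_quadratic_form[OF Xc eb])
  qed
  moreover have "hermitian d (?\<sigma> - ?c \<cdot>\<^sub>m X)"
    by (intro hermitian_minus hermitian_orth_proj hermitian_smult_real hX)
  moreover have "mtrace (?\<sigma> - ?c \<cdot>\<^sub>m X) = 1"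
  proof -
    have "mtrace (?\<sigma> - ?c \<cdot>\<^sub>m X) = mtrace ?\<sigma> - ?c * mtrace X"
      using mtrace_diff_smult_mult[OF orth_proj_carrier_mat Xc one_carrier_mat] Xc
      by (simp add: minus_carrier_mat)
    then show ?thesis
      using tr mtrace_orth_proj[of d 1 "\<lambda>_. us p"] orthonormalD[OF orthonormal_eigenvectorsD(1)[OF eb]] p
      by (simp add: orthonormal_def)
  qed
  ultimately show ?thesis unfolding is_state_def psd_iff_cinner by blast
qed

lemma exists_pos_of_sum_eq_0:
  fixes f :: "'a \<Rightarrow> real"
  assumes "finite I" "sum f I = 0" "\<exists>i\<in>I. f i \<noteq> 0"
  shows "\<exists>i\<in>I. f i > 0"
proof (rule ccontr)
  assume "\<not> ?thesis"
  then have "\<forall>i\<in>I. 0 \<le> - f i" by auto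
  moreover have "sum (\<lambda>i. - f i) I = 0" using assms(2) by (simp add: sum_negf)
  ultimately have "\<forall>i\<in>I. f i = 0" using sum_nonneg_eq_0_iff[OF assms(1), of "\<lambda>i. - f i"] by auto
  then show False using assms(3) by blast
qed

lemma not_determines_pure_states_if_one_positive:
  assumes l: "1 \<le> l" and QP: "\<forall>i<l. is_povm d m (Q i)"
    and X: "X \<in> ker_M_Q d l m Q" "X \<noteq> 0\<^sub>m d d" and one: "num_pos_eigenvalues X < 2"
  shows "\<not> determines_pure_states d l m Q"
proof
  assume det: "determines_pure_states d l m Q"
  have hX: "hermitian d X" using X(1) unfolding ker_M_Q_def by simp
  have Xc: "X \<in> carrier_mat d d" using hX by (rule hermitian_carrier_mat)
  obtain us lam where eb: "orthonormal_eigenvectors d X d us lam"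
    using hermitian_orthonormal_eigenbasis[OF hX] by blast
  have on: "orthonormal d d us" using eb by (rule orthonormal_eigenvectorsD)
  have tr: "mtrace X = 0" and sum0: "(\<Sum>i<d. lam i) = 0"
    using Re_mtrace_ker_M_Q[OF l QP X(1)] eigenbasis_mtrace[OF Xc eb] by simp_all
  have "\<exists>i<d. lam i \<noteq> 0" using X(2) eigenbasis_eq_zero[OF Xc eb] by blast
  then obtain p where p: "p < d" "lam p > 0" using exists_pos_of_sum_eq_0[OF _ sum0] by auto
  have "card {i. i < d \<and> lam i > 0} \<le> 1"
    using one num_pos_eigenvalues_eq_card[OF eigenbasis_char_poly[OF Xc eb]] by simp
  then have nonpos: "\<forall>i<d. i \<noteq> p \<longrightarrow> lam i \<le> 0"
    using p card_le_Suc0_iff_eq[of "{i. i < d \<and> lam i > 0}"] by force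
  define \<sigma> where "\<sigma> = orth_proj d 1 (\<lambda>_. us p)"
  define c where "c = complex_of_real (1 / lam p)"
  have "is_pure_state d \<sigma>"
    unfolding \<sigma>_def using orthonormalD[OF on] p by (intro is_pure_state_orth_proj_single) auto
  moreover have "is_state d (\<sigma> - c \<cdot>\<^sub>m X)"
    unfolding \<sigma>_def c_def by (rule is_state_subtract_single_positive[OF hX eb tr p nonpos])
  moreover have "M_Q l m Q \<sigma> = M_Q l m Q (\<sigma> - c \<cdot>\<^sub>m X)"
    unfolding c_def \<sigma>_def by (rule M_Q_diff_smult_ker[OF QP orth_proj_carrier_mat X(1), symmetric])
  ultimately have eq: "\<sigma> - c \<cdot>\<^sub>m X = \<sigma>" using det unfolding determines_pure_states_def by blast
  have "X = 0\<^sub>m d d"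
  proof (rule eq_matI)
    fix a b assume "a < dim_row (0\<^sub>m d d :: complex mat)" "b < dim_col (0\<^sub>m d d :: complex mat)"
    then have ab: "a < d" "b < d" by auto
    then have "c * X $$ (a, b) = 0" using arg_cong[OF eq, of "\<lambda>M. M $$ (a, b)"] Xc by (simp add: \<sigma>_def)
    moreover have "c \<noteq> 0" unfolding c_def using p by simp
    ultimately show "X $$ (a, b) = 0\<^sub>m d d $$ (a, b)" using ab by simp
  qed (use Xc in auto)
  with X(2) show False ..
qed

theorem proposition1:
  fixes d l m :: nat and Q :: "nat \<Rightarrow> nat \<Rightarrow> complex mat"
  assumes "d \<ge> 1" and "l \<ge> 1" and "m \<ge> 1"
    and "\<forall>i<l. is_povm d m (Q i)"
  shows "determines_pure_states d l m Q \<longleftrightarrow>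
    (\<forall>X \<in> ker_M_Q d l m Q. X \<noteq> 0\<^sub>m d d \<longrightarrow> num_pos_eigenvalues X \<ge> 2)"
proof
  assume "determines_pure_states d l m Q"
  then show "\<forall>X \<in> ker_M_Q d l m Q. X \<noteq> 0\<^sub>m d d \<longrightarrow> num_pos_eigenvalues X \<ge> 2"
    using not_determines_pure_states_if_one_positive[OF assms(2,4)] by (meson not_le)
next
  assume "\<forall>X \<in> ker_M_Q d l m Q. X \<noteq> 0\<^sub>m d d \<longrightarrow> num_pos_eigenvalues X \<ge> 2"
  then show "determines_pure_states d l m Q"
    by (rule determines_pure_states_if_two_positive[OF assms(4)])
qed

end
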